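(* For any strict pin words $u$ and $w$, $u\preceq w$ if and only if $\phi(u)$ is a factor of $\phi(w)$.
   Context: Pins are points of $\mathbb{Z}^2$. A pin $p$ separates a set $P$ from a set $Q$ horizontally (resp. vertically) if the horizontal (resp. vertical) line through $p$ has $P$ strictly on one side and $Q$ strictly on the other. A pin sequence is a sequence $(p_1,\dots,p_k)$ of pins, no two in a common row or column, such that for every $i\ge2$, $p_i$ lies outside the bounding box of $\{p_1,\dots,p_{i-1}\}$ and either $p_i$ separates $p_{i-1}$ from $\{p_1,\dots,p_{i-2}\}$ or $p_i$ is independent from $\{p_1,\dots,p_{i-1}\}$. Pin words: given a pin sequence $(p_1,\dots,p_n)$ and an origin $p_0$ such that $(p_0,\dots,p_n)$ is a pin sequence, each $p_i$ ($i\ge1$) is encoded by $U$ (resp. $D,L,R$) if $p_i$ separates $p_{i-1}$ from $\{p_0,\dots,p_{i-2}\}$ and lies above (resp. below, left of, right of) the bounding box of $\{p_0,\dots,p_{i-1}\}$, and by $1$ (resp. $2,3,4$) if $p_i$ is independent from $\{p_0,\dots,p_{i-1}\}$ and lies in the up-right (resp. up-left, bottom-left, bottom-right) corner region of that bounding box; the point $p_i$ is said to correspond to the $i$-th letter. Letters $1,2,3,4$ are numerals, $U,D,L,R$ directions. A strict pin word is a pin word of length $\ge2$ whose first letter is a numeral and all others directions. A point $x$ lies in quadrant $1$ (resp. $2,3,4$) with respect to a set $S$ if it is above and to the right of (resp. above-left, below-left, below-right of) all points of $S$. Order $\preceq$ on pin words: write $u=u^{(1)}\cdots u^{(j)}$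 as a product of strong numeral-led factors (each a numeral followed by any number of directions). Then $u\preceq w$ if $w$ can be written $w=v^{(1)}w^{(1)}\cdots v^{(j)}w^{(j)}v^{(j+1)}$ such that for each $i$: if $w^{(i)}$ begins with a numeral then $w^{(i)}=u^{(i)}$; if $w^{(i)}$ begins with a direction, then $v^{(i)}$ is nonempty, the point $p_k$ corresponding to the first letter of $w^{(i)}$ (in the pin sequence of $w$) lies in the quadrant given by the first letter of $u^{(i)}$ with respect to $\{p_0,\dots,p_{k-2}\}$, and all other letters of $u^{(i)}$ and $w^{(i)}$ agree. For a strict pin word $u=u'u''$ with $|u'|=2$, $\phi(u)=\varphi(u')u''$ with $\varphi$: $1R\mapsto RUR$, $2R\mapsto LUR$, $3R\mapsto LDR$, $4R\mapsto RDR$, $1L\mapsto RUL$, $2L\mapsto LUL$, $3L\mapsto LDL$, $4L\mapsto RDL$, $1U\mapsto URU$, $2U\mapsto ULU$, $3U\mapsto DLU$, $4U\mapsto DRU$, $1D\mapsto URD$, $2D\mapsto ULD$, $3D\mapsto DLD$, $4D\mapsto DRD$. A factor is a contiguous subword. *)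

theory Defs
  imports Main "HOL-Library.Sublist"
begin

type_synonym pin = "int \<times> int"

datatype letter = N1 | N2 | N3 | N4 | U | D | L | R

definition is_numeral :: "letter \<Rightarrow> bool" where
  "is_numeral c \<longleftrightarrow> c \<in> {N1, N2, N3, N4}"

definition is_direction :: "letter \<Rightarrow> bool" where
  "is_direction c \<longleftrightarrow> c \<in> {U, D, L, R}"

definition above :: "pin \<Rightarrow> pin set \<Rightarrow> bool" where
  "above p S \<longleftrightarrow> (\<forall>q\<in>S. snd q < snd p)"
definition below :: "pin \<Rightarrow> pin set \<Rightarrow> bool" where
  "below p S \<longleftrightarrow> (\<forall>q\<in>S. snd p < snd q)"
definition left_of :: "pin \<Rightarrow> pin set \<Rightarrow> bool" where
  "left_of p S \<longleftrightarrow> (\<forall>q\<in>S. fst p < fst q)"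
definition right_of :: "pin \<Rightarrow> pin set \<Rightarrow> bool" where
  "right_of p S \<longleftrightarrow> (\<forall>q\<in>S. fst q < fst p)"

definition outside_bbox :: "pin \<Rightarrow> pin set \<Rightarrow> bool" where
  "outside_bbox p S \<longleftrightarrow> above p S \<or> below p S \<or> left_of p S \<or> right_of p S"

fun quadrant :: "letter \<Rightarrow> pin \<Rightarrow> pin set \<Rightarrow> bool" where
  "quadrant N1 p S \<longleftrightarrow> above p S \<and> right_of p S"
| "quadrant N2 p S \<longleftrightarrow> above p S \<and> left_of p S"
| "quadrant N3 p S \<longleftrightarrow> below p S \<and> left_of p S"
| "quadrant N4 p S \<longleftrightarrow> below p S \<and> right_of p S"
| "quadrant _ p S \<longleftrightarrow> False"

definition separates_h :: "pin \<Rightarrow> pin set \<Rightarrow> pin set \<Rightarrow> bool" where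
  "separates_h p P Q \<longleftrightarrow>
     ((\<forall>a\<in>P. snd a < snd p) \<and> (\<forall>b\<in>Q. snd p < snd b)) \<or>
     ((\<forall>a\<in>P. snd p < snd a) \<and> (\<forall>b\<in>Q. snd b < snd p))"
definition separates_v :: "pin \<Rightarrow> pin set \<Rightarrow> pin set \<Rightarrow> bool" where
  "separates_v p P Q \<longleftrightarrow>
     ((\<forall>a\<in>P. fst a < fst p) \<and> (\<forall>b\<in>Q. fst p < fst b)) \<or>
     ((\<forall>a\<in>P. fst p < fst a) \<and> (\<forall>b\<in>Q. fst b < fst p))"
definition separates :: "pin \<Rightarrow> pin set \<Rightarrow> pin set \<Rightarrow> bool" where
  "separates p P Q \<longleftrightarrow> separates_h p P Q \<or> separates_v p P Q"

definition independent :: "pin \<Rightarrow> pin set \<Rightarrow> bool" where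
  "independent p S \<longleftrightarrow> (\<forall>a\<in>S. \<forall>b\<in>S. \<not> separates p {a} {b})"

text \<open>Pin sequence (p_1,...,p_k) stored 0-indexed as ps.\<close>
definition pin_seq :: "pin list \<Rightarrow> bool" where
  "pin_seq ps \<longleftrightarrow> distinct (map fst ps) \<and> distinct (map snd ps) \<and>
     (\<forall>i. 1 \<le> i \<and> i < length ps \<longrightarrow>
        outside_bbox (ps ! i) (set (take i ps)) \<and>
        (separates (ps ! i) {ps ! (i - 1)} (set (take (i - 1) ps)) \<or>
         independent (ps ! i) (set (take i ps))))"

text \<open>Encoding of a point p with previous point prev, earlier points E (so all points so far
  are insert prev E). Direction letters require E nonempty (convention: the first letter of a
  pin word is a numeral).\<close>
definition encodes_letter :: "letter \<Rightarrow> pin \<Rightarrow> pin \<Rightarrow> pin set \<Rightarrow> bool" where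
  "encodes_letter c p prev E \<longleftrightarrow>
     (if is_direction c then
        E \<noteq> {} \<and> separates p {prev} E \<and>
        (case c of U \<Rightarrow> above p (insert prev E) | D \<Rightarrow> below p (insert prev E)
                 | L \<Rightarrow> left_of p (insert prev E) | R \<Rightarrow> right_of p (insert prev E)
                 | _ \<Rightarrow> False)
      else independent p (insert prev E) \<and> quadrant c p (insert prev E))"

text \<open>ps = [p_0, p_1, ..., p_n] (origin p_0 included) realizes the pin word w of length n.\<close>
definition realizes :: "pin list \<Rightarrow> letter list \<Rightarrow> bool" where
  "realizes ps w \<longleftrightarrow> length ps = length w + 1 \<and> pin_seq ps \<and>
     (\<forall>i < length w. encodes_letter (w ! i) (ps ! (i + 1)) (ps ! i) (set (take i ps)))"

definition pin_word :: "letter list \<Rightarrow> bool" where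
  "pin_word w \<longleftrightarrow> (\<exists>ps. realizes ps w)"

definition strict_pin_word :: "letter list \<Rightarrow> bool" where
  "strict_pin_word w \<longleftrightarrow> pin_word w \<and> length w \<ge> 2 \<and> is_numeral (hd w) \<and>
     (\<forall>c\<in>set (tl w). is_direction c)"

definition numeral_factorization :: "letter list \<Rightarrow> letter list list \<Rightarrow> bool" where
  "numeral_factorization u us \<longleftrightarrow> concat us = u \<and>
     (\<forall>f\<in>set us. f \<noteq> [] \<and> is_numeral (hd f) \<and> (\<forall>c\<in>set (tl f). is_direction c))"

text \<open>The order u \<preceq> w. w = v1 w1 ... vj wj v(j+1); k is the (1-based) index in w of the
  first letter of wi, and ps = [p_0,...,p_n] is the pin sequence of w.\<close>
definition pin_le :: "letter list \<Rightarrow> letter list \<Rightarrow> bool" where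
  "pin_le u w \<longleftrightarrow>
     (\<exists>us vs ws vlast ps.
        numeral_factorization u us \<and> length vs = length us \<and> length ws = length us \<and>
        w = concat (map2 (@) vs ws) @ vlast \<and> realizes ps w \<and>
        (\<forall>i < length us.
           (let k = length (concat (map2 (@) (take i vs) (take i ws))) + length (vs ! i) + 1 in
            ws ! i \<noteq> [] \<and>
            (is_numeral (hd (ws ! i)) \<longrightarrow> ws ! i = us ! i) \<and>
            (is_direction (hd (ws ! i)) \<longrightarrow>
               vs ! i \<noteq> [] \<and>
               quadrant (hd (us ! i)) (ps ! k) (set (take (k - 1) ps)) \<and>
               tl (ws ! i) = tl (us ! i)))))"

fun varphi :: "letter \<Rightarrow> letter \<Rightarrow> letter list" where
  "varphi N1 R = [R, U, R]" | "varphi N2 R = [L, U, R]"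
| "varphi N3 R = [L, D, R]" | "varphi N4 R = [R, D, R]"
| "varphi N1 L = [R, U, L]" | "varphi N2 L = [L, U, L]"
| "varphi N3 L = [L, D, L]" | "varphi N4 L = [R, D, L]"
| "varphi N1 U = [U, R, U]" | "varphi N2 U = [U, L, U]"
| "varphi N3 U = [D, L, U]" | "varphi N4 U = [D, R, U]"
| "varphi N1 D = [U, R, D]" | "varphi N2 D = [U, L, D]"
| "varphi N3 D = [D, L, D]" | "varphi N4 D = [D, R, D]"
| "varphi _ _ = []"

definition phi :: "letter list \<Rightarrow> letter list" where
  "phi u = varphi (u ! 0) (u ! 1) @ drop 2 u"

end

theory Submission
  imports Defs
begin

text \<open>
  In the pin sequence of a strict pin word \<open>w\<close> every \<open>p\<^bsub>k+1\<^esub>\<close> with \<open>k \<ge> 1\<close> separates \<open>p\<^sub>k\<close>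
  from the earlier points, so consecutive directions alternate between vertical and horizontal.
  For \<open>k \<ge> 1\<close>, letter \<open>k\<close> of \<open>\<phi>(w)\<close> names the side of the bounding box of
  \<open>p\<^sub>0, \<dots>, p\<^bsub>k-1\<^esub>\<close> on which \<open>p\<^sub>k\<close> lies (for \<open>k = 1\<close> it is the middle letter of \<open>\<phi>\<close>, a side
  of the quadrant of \<open>p\<^sub>1\<close>). Since \<open>p\<^bsub>s+1\<^esub>\<close> separates \<open>p\<^sub>s\<close> from \<open>p\<^sub>0, \<dots>, p\<^bsub>s-1\<^esub>\<close>
  perpendicularly, it lies beyond those points on both sides named by letters \<open>s\<close> and \<open>s+1\<close>
  of \<open>\<phi>(w)\<close>; this fixes its quadrant, and \<open>\<phi>(c d)\<close> begins with exactly the two sides of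
  quadrant \<open>c\<close>. Hence the occurrences of \<open>u\<close> in \<open>w\<close> that start at a direction and satisfy the
  quadrant condition are the occurrences of \<open>\<phi>(u)\<close> in \<open>\<phi>(w)\<close> at positive offsets, and prefix
  occurrences are those at offset 0; as a strict \<open>u\<close> is its own numeral-led factorization, there
  are no other cases of \<open>u \<preceq> w\<close>.
\<close>

fun beyond :: "letter \<Rightarrow> pin \<Rightarrow> pin set \<Rightarrow> bool" where
  "beyond U p S \<longleftrightarrow> above p S"
| "beyond D p S \<longleftrightarrow> below p S"
| "beyond L p S \<longleftrightarrow> left_of p S"
| "beyond R p S \<longleftrightarrow> right_of p S"
| "beyond _ p S \<longleftrightarrow> False"

fun vertical :: "letter \<Rightarrow> bool" where
  "vertical U = True"
| "vertical D = True"
| "vertical _ = False"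

lemma is_direction_cases: "is_direction c \<Longrightarrow> c = U \<or> c = D \<or> c = L \<or> c = R"
  by (auto simp: is_direction_def)

lemma is_numeral_cases: "is_numeral c \<Longrightarrow> c = N1 \<or> c = N2 \<or> c = N3 \<or> c = N4"
  by (auto simp: is_numeral_def)

lemma numeral_not_direction: "is_numeral c \<Longrightarrow> \<not> is_direction c"
  by (auto simp: is_numeral_def is_direction_def)

lemma numeral_or_direction: "is_numeral c \<or> is_direction c"
  by (cases c) (auto simp: is_numeral_def is_direction_def)

lemma beyond_insertD: "beyond a p (insert q S) \<Longrightarrow> beyond a p S"
  by (cases a) (auto simp: above_def below_def left_of_def right_of_def)

lemma separates_beyond:
  assumes "E \<noteq> {}" "separates p {q} E" "beyond a p (insert q E)"
  shows "if vertical a then separates_v p {q} E else separates_h p {q} E"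
proof -
  obtain e where "e \<in> E" using assms(1) by blast
  then show ?thesis
    using assms(2,3)
    by (cases a) (fastforce simp: separates_def separates_h_def separates_v_def
        above_def below_def left_of_def right_of_def)+
qed

lemma consecutive_separators_perpendicular:
  assumes "E \<noteq> {}" "separates p {q} E" "beyond a p (insert q E)"
    and "separates r {p} (insert q E)" "beyond b r (insert p (insert q E))"
  shows "vertical a \<noteq> vertical b"
proof
  assume "vertical a = vertical b"
  moreover obtain e where "e \<in> E" using assms(1) by blast
  moreover note separates_beyond[OF assms(1-3)] separates_beyond[OF _ assms(4,5)]
  ultimately show False
    by (cases "vertical a") (fastforce simp: separates_h_def separates_v_def)+
qed

lemma separator_inherits_perpendicular_beyond:
  assumes "E \<noteq> {}" "separates p {q} E" "beyond y p (insert q E)"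
    and "beyond x q E" "vertical x \<noteq> vertical y"
  shows "beyond x p E"
proof -
  obtain e where "e \<in> E" using assms(1) by blast
  then show ?thesis
    using separates_beyond[OF assms(1-3)] assms(4,5)
    by (cases x; cases "vertical y")
       (auto simp: separates_h_def separates_v_def above_def below_def left_of_def right_of_def)
qed

lemma beyond_unique:
  assumes "E \<noteq> {}" "beyond a p E" "beyond b p E" "vertical a = vertical b"
  shows "a = b"
proof -
  obtain e where "e \<in> E" using assms(1) by blast
  then show ?thesis
    using assms(2-4) by (cases a; cases b) (force simp: above_def below_def left_of_def right_of_def)+
qed

lemma quadrant_iff_beyond_varphi:
  "is_numeral c \<Longrightarrow> is_direction d \<Longrightarrow>
     quadrant c p E \<longleftrightarrow> beyond (varphi c d ! 0) p E \<and> beyond (varphi c d ! 1) p E"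
  by (auto dest!: is_numeral_cases is_direction_cases)

lemma varphi_perpendicular:
  "is_numeral c \<Longrightarrow> is_direction d \<Longrightarrow>
     vertical (varphi c d ! 0) \<noteq> vertical (varphi c d ! 1) \<and> vertical (varphi c d ! 1) \<noteq> vertical d"
  by (auto dest!: is_numeral_cases is_direction_cases)

lemma quadrant_iff_varphi:
  assumes "E \<noteq> {}" "is_numeral c" "is_direction d"
    and "beyond x p E" "beyond y p E" "vertical x \<noteq> vertical y" "vertical y \<noteq> vertical d"
  shows "quadrant c p E \<longleftrightarrow> x = varphi c d ! 0 \<and> y = varphi c d ! 1"
proof -
  have "vertical (varphi c d ! 0) = vertical x" "vertical (varphi c d ! 1) = vertical y"
    using varphi_perpendicular[OF assms(2,3)] assms(6,7) by auto
  then show ?thesis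
    using quadrant_iff_beyond_varphi[OF assms(2,3)] beyond_unique[OF assms(1)] assms(4,5) by metis
qed

lemma varphi_inj:
  assumes "is_numeral c" "is_numeral c'" "is_direction d"
    and "varphi c d ! 0 = varphi c' d ! 0" "varphi c d ! 1 = varphi c' d ! 1"
  shows "c = c'"
  using is_numeral_cases[OF assms(1)] is_numeral_cases[OF assms(2)] is_direction_cases[OF assms(3)]
    assms(4,5)
  by auto

lemma phi_Cons_Cons:
  "is_numeral c \<Longrightarrow> is_direction d \<Longrightarrow> phi (c # d # t) = varphi c d ! 0 # varphi c d ! 1 # d # t"
  by (auto simp: phi_def dest!: is_numeral_cases is_direction_cases)

lemma strict_pin_wordE:
  assumes "strict_pin_word w"
  obtains c d t where "w = c # d # t" "is_numeral c" "is_direction d" "\<forall>e\<in>set t. is_direction e"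
  using assms by (auto simp: strict_pin_word_def neq_Nil_conv Suc_le_length_iff numeral_2_eq_2)

lemma strict_pin_word_nth_direction:
  "strict_pin_word w \<Longrightarrow> 0 < i \<Longrightarrow> i < length w \<Longrightarrow> is_direction (w ! i)"
  by (erule strict_pin_wordE) (auto simp: nth_Cons' less_Suc_eq_0_disj)

lemma phi_nth_Suc:
  "strict_pin_word w \<Longrightarrow> 0 < i \<Longrightarrow> phi w ! Suc i = w ! i"
  by (erule strict_pin_wordE) (auto simp: phi_Cons_Cons nth_Cons')

lemma realizes_direction:
  assumes "realizes ps w" "i < length w" "is_direction (w ! i)"
  shows "set (take i ps) \<noteq> {}" "separates (ps ! Suc i) {ps ! i} (set (take i ps))"
    "beyond (w ! i) (ps ! Suc i) (insert (ps ! i) (set (take i ps)))"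
  using assms is_direction_cases[OF assms(3)]
  by (auto simp: realizes_def encodes_letter_def)

lemma realizes_numeral:
  assumes "realizes ps w" "i < length w" "is_numeral (w ! i)"
  shows "quadrant (w ! i) (ps ! Suc i) (insert (ps ! i) (set (take i ps)))"
  using assms numeral_not_direction[OF assms(3)]
  by (auto simp: realizes_def encodes_letter_def)

lemma set_take_Suc_nth: "i < length xs \<Longrightarrow> set (take (Suc i) xs) = insert (xs ! i) (set (take i xs))"
  by (simp add: take_Suc_conv_app_nth)

lemma phi_nth_beyond:
  assumes "strict_pin_word w" "realizes ps w" "0 < k" "k \<le> length w"
  shows "beyond (phi w ! k) (ps ! k) (set (take k ps))"
proof -
  obtain c d t where w: "w = c # d # t" "is_numeral c" "is_direction d"
    using assms(1) by (rule strict_pin_wordE)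
  have len: "length ps = Suc (length w)" using assms(2) by (simp add: realizes_def)
  show ?thesis
  proof (cases "k = 1")
    case True
    have "quadrant c (ps ! 1) (set (take 1 ps))"
      using realizes_numeral[OF assms(2), of 0] w len by (simp add: take_Suc_conv_app_nth)
    then show ?thesis
      using quadrant_iff_beyond_varphi[OF w(2,3)] True by (simp add: w(1) phi_Cons_Cons[OF w(2,3)])
  next
    case False
    then obtain j where j: "k = Suc j" "0 < j" using assms(3) by (cases k) auto
    have "is_direction (w ! j)" using strict_pin_word_nth_direction assms(1,4) j by simp
    then show ?thesis
      using realizes_direction(3)[OF assms(2)] phi_nth_Suc[OF assms(1)] set_take_Suc_nth[of j ps]
        assms(4) j len by simp
  qed
qed

lemma phi_nth_perpendicular:
  assumes "strict_pin_word w" "realizes ps w" "0 < k" "k < length w"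
  shows "vertical (phi w ! k) \<noteq> vertical (phi w ! Suc k)"
proof (cases "k = 1")
  case True
  obtain c d t where w: "w = c # d # t" "is_numeral c" "is_direction d"
    using assms(1) by (rule strict_pin_wordE)
  show ?thesis
    using varphi_perpendicular[OF w(2,3)] True by (simp add: w(1) phi_Cons_Cons[OF w(2,3)])
next
  case False
  then obtain j where j: "k = Suc j" "0 < j" using assms(3) by (cases k) auto
  have len: "Suc k < length ps" using assms(2,4) by (simp add: realizes_def)
  have "is_direction (w ! j)" "is_direction (w ! Suc j)"
    using strict_pin_word_nth_direction assms(1,4) j by simp_all
  then have "vertical (w ! j) \<noteq> vertical (w ! Suc j)"
    using consecutive_separators_perpendicular realizes_direction[OF assms(2)]
      set_take_Suc_nth[of j ps] set_take_Suc_nth[of "Suc j" ps] assms(4) j len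
    by (metis Suc_lessD)
  then show ?thesis using phi_nth_Suc[OF assms(1)] j by simp
qed

lemma quadrant_iff_phi:
  assumes "strict_pin_word w" "realizes ps w" "0 < s" "Suc s < length w" "is_numeral c"
  shows "quadrant c (ps ! Suc s) (set (take s ps)) \<longleftrightarrow>
    phi w ! s = varphi c (w ! Suc s) ! 0 \<and> phi w ! Suc s = varphi c (w ! Suc s) ! 1"
proof -
  define E q p where "E = set (take s ps)" and "q = ps ! s" and "p = ps ! Suc s"
  have y: "phi w ! Suc s = w ! s" using phi_nth_Suc[OF assms(1,3)] .
  have d: "is_direction (w ! Suc s)" using strict_pin_word_nth_direction assms(1,4) by simp
  have "is_direction (w ! s)" using strict_pin_word_nth_direction assms(1,3,4) by simp
  then have sep: "E \<noteq> {}" "separates p {q} E" "beyond (w ! s) p (insert q E)"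
    using realizes_direction[OF assms(2) Suc_lessD[OF assms(4)]] by (simp_all add: E_def p_def q_def)
  have perp: "vertical (phi w ! s) \<noteq> vertical (w ! s)" "vertical (w ! s) \<noteq> vertical (w ! Suc s)"
    using phi_nth_perpendicular[OF assms(1,2,3) Suc_lessD[OF assms(4)]]
      phi_nth_perpendicular[OF assms(1,2) _ assms(4)] phi_nth_Suc[OF assms(1)] y assms(3)
    by simp_all
  have "beyond (phi w ! s) q E"
    using phi_nth_beyond[OF assms(1,2,3)] assms(4) by (simp add: E_def q_def)
  then have "beyond (phi w ! s) p E"
    using separator_inherits_perpendicular_beyond[OF sep] perp(1) by simp
  moreover have "beyond (w ! s) p E" using beyond_insertD[OF sep(3)] .
  ultimately show ?thesis
    using quadrant_iff_varphi[OF sep(1) assms(5) d _ _ perp] y by (simp add: E_def p_def)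
qed

lemma prefix_Cons_drop_iff:
  "prefix (x # xs) (drop s ys) \<longleftrightarrow> s < length ys \<and> ys ! s = x \<and> prefix xs (drop (Suc s) ys)"
  by (cases "s < length ys") (auto simp flip: Cons_nth_drop_Suc)

lemma sublist_iff_prefix_drop: "sublist xs ys \<longleftrightarrow> (\<exists>s. prefix xs (drop s ys))"
  unfolding sublist_altdef' by (metis suffix_def suffix_drop append_eq_conv_conj)

lemma prefix_phi_iff:
  assumes "strict_pin_word u" "strict_pin_word w"
  shows "prefix (phi u) (phi w) \<longleftrightarrow> prefix u w"
proof -
  obtain c d t where u: "u = c # d # t" "is_numeral c" "is_direction d"
    using assms(1) by (rule strict_pin_wordE)
  obtain c' d' t' where w: "w = c' # d' # t'" "is_numeral c'" "is_direction d'"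
    using assms(2) by (rule strict_pin_wordE)
  have "d = d' \<Longrightarrow> varphi c d ! 0 = varphi c' d' ! 0 \<and> varphi c d ! 1 = varphi c' d' ! 1 \<longleftrightarrow> c = c'"
    using varphi_inj[OF u(2) w(2) u(3)] by blast
  then show ?thesis by (auto simp: u w phi_Cons_Cons)
qed

text \<open>\<open>s\<close> is the position in \<open>w\<close> of the letter replacing the numeral of \<open>u\<close>; the pin of
  that letter is \<open>ps ! Suc s\<close>, since \<open>ps\<close> starts with the origin.\<close>

definition quadrant_occurrence :: "letter list \<Rightarrow> letter list \<Rightarrow> pin list \<Rightarrow> nat \<Rightarrow> bool" where
  "quadrant_occurrence u w ps s \<longleftrightarrow>
     0 < s \<and> prefix (tl u) (drop (Suc s) w) \<and> quadrant (hd u) (ps ! Suc s) (set (take s ps))"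

lemma prefix_phi_drop_iff:
  assumes "strict_pin_word u" "strict_pin_word w" "realizes ps w" "0 < s"
  shows "prefix (phi u) (drop s (phi w)) \<longleftrightarrow> quadrant_occurrence u w ps s"
proof -
  obtain c d t where u: "u = c # d # t" "is_numeral c" "is_direction d"
    using assms(1) by (rule strict_pin_wordE)
  obtain c' d' t' where w: "w = c' # d' # t'" "is_numeral c'" "is_direction d'"
    using assms(2) by (rule strict_pin_wordE)
  have phi_w: "length (phi w) = Suc (length w)" "drop (Suc (Suc s)) (phi w) = drop (Suc s) w"
    by (simp_all add: w phi_Cons_Cons)
  have phi_u: "phi u = varphi c d ! 0 # varphi c d ! 1 # tl u"
    by (simp add: u phi_Cons_Cons)
  show ?thesis
  proof (cases "prefix (tl u) (drop (Suc s) w)")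
    case True
    then have "Suc s < length w" "w ! Suc s = d" by (simp_all add: u prefix_Cons_drop_iff)
    then show ?thesis
      using quadrant_iff_phi[OF assms(2-4)] assms(4) u True phi_u phi_w
      by (simp add: prefix_Cons_drop_iff quadrant_occurrence_def)
  next
    case False
    then show ?thesis
      using phi_u phi_w by (simp add: prefix_Cons_drop_iff quadrant_occurrence_def)
  qed
qed

lemma numeral_factorization_strict_iff:
  assumes "strict_pin_word u"
  shows "numeral_factorization u us \<longleftrightarrow> us = [u]"
proof
  assume nf: "numeral_factorization u us"
  have dirs: "\<forall>c\<in>set (tl u). is_direction c" "u \<noteq> []"
    using assms by (auto simp: strict_pin_word_def)
  obtain f r where us: "us = f # r"
    using nf dirs by (cases us) (auto simp: numeral_factorization_def)
  have "r = []"
  proof (cases r)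
    case (Cons g r')
    with nf us have "g \<noteq> []" "is_numeral (hd g)" "tl u = tl f @ g @ concat r'" "f \<noteq> []"
      by (auto simp: numeral_factorization_def)
    then have "hd g \<in> set (tl u)" by (cases g) auto
    with dirs \<open>is_numeral (hd g)\<close> show ?thesis using numeral_not_direction by blast
  qed simp
  with nf us show "us = [u]" by (simp add: numeral_factorization_def)
next
  assume "us = [u]"
  then show "numeral_factorization u us"
    using assms by (auto simp: numeral_factorization_def strict_pin_word_def)
qed

lemma pin_le_strict_iff:
  assumes "strict_pin_word u"
  shows "pin_le u w \<longleftrightarrow> (\<exists>v w' v' ps. w = v @ w' @ v' \<and> realizes ps w \<and> w' \<noteq> [] \<and>
    (is_numeral (hd w') \<longrightarrow> w' = u) \<and>
    (is_direction (hd w') \<longrightarrow>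
       v \<noteq> [] \<and> quadrant (hd u) (ps ! Suc (length v)) (set (take (length v) ps)) \<and> tl w' = tl u))"
  unfolding pin_le_def numeral_factorization_strict_iff[OF assms]
  by (fastforce simp: length_Suc_conv Let_def)

lemma pin_le_imp_occurrence:
  assumes "strict_pin_word u" "strict_pin_word w" "pin_le u w"
  shows "\<exists>ps. realizes ps w \<and> (prefix u w \<or> (\<exists>s. quadrant_occurrence u w ps s))"
proof -
  obtain v w' v' ps where dec: "w = v @ w' @ v'" "realizes ps w" "w' \<noteq> []"
    "is_numeral (hd w') \<longrightarrow> w' = u"
    "is_direction (hd w') \<longrightarrow>
       v \<noteq> [] \<and> quadrant (hd u) (ps ! Suc (length v)) (set (take (length v) ps)) \<and> tl w' = tl u"
    using assms(3) unfolding pin_le_strict_iff[OF assms(1)] by blast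
  show ?thesis
  proof (cases "is_numeral (hd w')")
    case True
    have "v = []"
    proof (cases v)
      case (Cons x v0)
      then have "hd w' \<in> set (tl w)" using dec(1,3) by (cases w') auto
      with assms(2) True show ?thesis using numeral_not_direction by (auto simp: strict_pin_word_def)
    qed simp
    then show ?thesis using True dec by auto
  next
    case False
    then have "is_direction (hd w')" using numeral_or_direction by blast
    with dec have "drop (Suc (length v)) w = tl u @ v'" "0 < length v" by (cases w'; auto)+
    with dec(2,5) \<open>is_direction (hd w')\<close> have "quadrant_occurrence u w ps (length v)"
      by (simp add: quadrant_occurrence_def)
    with dec(2) show ?thesis by blast
  qed
qed

lemma prefix_imp_pin_le:
  assumes "strict_pin_word u" "realizes ps w" "prefix u w"
  shows "pin_le u w"
proof -
  obtain v' where "w = [] @ u @ v'" using assms(3) by (auto simp: prefix_def)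
  moreover have "is_numeral (hd u)" "u \<noteq> []" using assms(1) by (auto simp: strict_pin_word_def)
  ultimately show ?thesis
    unfolding pin_le_strict_iff[OF assms(1)] using assms(2) numeral_not_direction by blast
qed

lemma quadrant_occurrence_imp_pin_le:
  assumes "strict_pin_word u" "strict_pin_word w" "realizes ps w" "quadrant_occurrence u w ps s"
  shows "pin_le u w"
proof -
  obtain v' where s: "0 < s" "drop (Suc s) w = tl u @ v'" "quadrant (hd u) (ps ! Suc s) (set (take s ps))"
    using assms(4) by (auto simp: quadrant_occurrence_def prefix_def)
  have "tl u \<noteq> []" using assms(1) by (auto elim: strict_pin_wordE)
  then have "s < length w" using s(2) by (metis Suc_lessD drop_eq_Nil append_is_Nil_conv not_le)
  then have "w = take s w @ (w ! s # tl u) @ v'" by (metis s(2) id_take_nth_drop append_Cons)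
  moreover have "is_direction (w ! s)"
    using strict_pin_word_nth_direction[OF assms(2) s(1) \<open>s < length w\<close>] .
  ultimately show ?thesis
    unfolding pin_le_strict_iff[OF assms(1)]
    using assms(3) s \<open>s < length w\<close> numeral_not_direction
    by (intro exI[of _ "take s w"] exI[of _ "w ! s # tl u"] exI[of _ v'] exI[of _ ps]) auto
qed

theorem lemma7:
  assumes "strict_pin_word u" and "strict_pin_word w"
  shows "pin_le u w \<longleftrightarrow> sublist (phi u) (phi w)"
proof -
  obtain ps where ps: "realizes ps w"
    using assms(2) by (auto simp: strict_pin_word_def pin_word_def)
  have "pin_le u w \<longleftrightarrow> prefix u w \<or> (\<exists>s>0. prefix (phi u) (drop s (phi w)))"
  proof
    assume "pin_le u w"
    then obtain ps' where "realizes ps' w" "prefix u w \<or> (\<exists>s. quadrant_occurrence u w ps' s)"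
      using pin_le_imp_occurrence[OF assms] by blast
    moreover have "0 < s \<and> prefix (phi u) (drop s (phi w))" if "quadrant_occurrence u w ps' s" for s
      using that prefix_phi_drop_iff[OF assms \<open>realizes ps' w\<close>] by (auto simp: quadrant_occurrence_def)
    ultimately show "prefix u w \<or> (\<exists>s>0. prefix (phi u) (drop s (phi w)))" by blast
  next
    assume "prefix u w \<or> (\<exists>s>0. prefix (phi u) (drop s (phi w)))"
    then show "pin_le u w"
      using prefix_imp_pin_le[OF assms(1) ps] quadrant_occurrence_imp_pin_le[OF assms ps]
        prefix_phi_drop_iff[OF assms ps] by blast
  qed
  also have "\<dots> \<longleftrightarrow> (\<exists>s. prefix (phi u) (drop s (phi w)))"
    using prefix_phi_iff[OF assms] by (metis drop0 gr0I)
  also have "\<dots> \<longleftrightarrow> sublist (phi u) (phi w)"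
    by (rule sublist_iff_prefix_drop[symmetric])
  finally show ?thesis .
qed

end
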